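(* Let $|p|<1$ and let $(a_k)_{k\in\mathbb Z},(b_k),(c_k),(d_k),(e_k),(f_k),(g_k)$ be sequences of nonzero complex numbers with $a_k^3=b_kc_kd_ke_kf_kg_k$ for all $k$, such that all expressions below are well defined and such that $$z_k:=\frac{\theta\big(b_k,c_k,d_k,e_k,f_k,a_k^3/(b_kc_kd_ke_kf_k);p\big)}{\theta\big(a_k/b_k,a_k/c_k,a_k/d_k,a_k/e_k,a_k/f_k,b_kc_kd_ke_kf_k/a_k^2;p\big)}$$ satisfies $\operatorname{Re} z_k>0$ for all integers $k$ and $\sum_{k=-\infty}^\infty\log z_k$ converges (principal branch of the logarithm). Then \begin{align*} &\sum_{k=-\infty}^\infty\frac{\theta\big(a_k,\,a_k/(e_kf_k),\,a_k^2/(b_kc_kd_ke_k),\,a_k^2/(b_kc_kd_kf_k);p\big)}{\theta\big(a_k^2/(b_kc_kd_ke_kf_k),\,a_k^2/(b_kc_kd_k),\,a_k/f_k,\,a_k/e_k;p\big)}\prod_{j=0}^{k-1}z_j\\ &\quad\times\Bigg[1-\frac{\theta\big(a_k/(b_kc_k),a_k/(b_kd_k),a_k/(c_kd_k);p\big)}{\theta\big(a_k/d_k,a_k/c_k,a_k/b_k;p\big)}\cdot\frac{\theta(e_k,f_k,g_k;p)}{\theta\big(a_k^2/(b_kc_kd_ke_k),a_k^2/(b_kc_kd_kf_k),a_k^2/(b_kc_kd_kg_k);p\big)}\Bigg]\\ &=\prod_{k=-\infty}^{-1}\frac1{z_k}-\prod_{k=0}^\infty z_k. \end{align*}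
   Context: For $|p|<1$ and $x\neq 0$, $\theta(x;p)=(x;p)_\infty(p/x;p)_\infty$ where $(x;p)_\infty=\prod_{k\ge 0}(1-xp^k)$, and $\theta(x_1,\dots,x_m;p)=\prod_{i=1}^m\theta(x_i;p)$. Generalized products: $\prod_{j=0}^{k-1}z_j=z_0\cdots z_{k-1}$ for $k\ge1$, $=1$ for $k=0$, and $=(z_kz_{k+1}\cdots z_{-1})^{-1}$ for $k\le -1$. The bilateral sum means $\lim_{m,n\to\infty}\sum_{k=-m}^n$. *)

theory Defs
  imports "HOL-Analysis.Analysis"
begin

definition qpoch_inf :: "complex \<Rightarrow> complex \<Rightarrow> complex" where
  "qpoch_inf x p = (\<Prod>k. 1 - x * p ^ k)"

definition theta :: "complex \<Rightarrow> complex \<Rightarrow> complex" where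
  "theta x p = qpoch_inf x p * qpoch_inf (p / x) p"

definition thetas :: "complex list \<Rightarrow> complex \<Rightarrow> complex" where
  "thetas xs p = prod_list (map (\<lambda>x. theta x p) xs)"

definition gprod :: "(int \<Rightarrow> complex) \<Rightarrow> int \<Rightarrow> complex" where
  "gprod z k = (if k \<ge> 0 then (\<Prod>j\<in>{0..<k}. z j)
                else inverse (\<Prod>j\<in>{k..-1}. z j))"

definition bilateral_sums :: "(int \<Rightarrow> complex) \<Rightarrow> complex \<Rightarrow> bool" where
  "bilateral_sums f S \<longleftrightarrow>
     ((\<lambda>(m::nat, n::nat). \<Sum>k\<in>{- int m..int n}. f k) \<longlongrightarrow> S)
       (sequentially \<times>\<^sub>F sequentially)"

end

theory Submission
  imports Defs "HOL-Complex_Analysis.Complex_Analysis"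
begin

text \<open>
  The \<open>k\<close>-th summand equals
  \<open>gprod z k * (1 - z\<^sub>k) = gprod z k - gprod z (k + 1)\<close>, so the bilateral series telescopes,
  and convergence of \<open>\<Sum> Ln z\<^sub>k\<close> makes both one-sided products converge.
  The summand identity is a rational consequence of two instances of
  \<open>\<theta>(a) \<theta>(a/bc) \<theta>(a/bd) \<theta>(a/cd) - \<theta>(a/b) \<theta>(a/c) \<theta>(a/d) \<theta>(a/bcd) = (a/bcd) \<theta>(b) \<theta>(c) \<theta>(d) \<theta>(a\<^sup>2/bcd)\<close>,
  a special case of Weierstrass' addition formula for \<open>\<theta>\<close>. The addition formula is proved
  classically: in \<open>x\<close>, both sides satisfy \<open>f (p x) = f x / x\<^sup>2\<close>; dividing by \<open>\<theta>(x u\<^sup>\<plusminus>\<^sup>1)\<close>, whose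
  zeros are simple for generic \<open>u\<close>, leaves a \<open>p\<close>-periodic holomorphic function on \<open>\<complex> - {0}\<close>,
  bounded on the annulus \<open>|p| \<le> |x| \<le> 1\<close> and therefore constant by Liouville's theorem.
\<close>

section \<open>Multiplicatively periodic holomorphic functions\<close>

lemma power_int_mult_invariant:
  fixes p :: "'a::field"
  assumes "p \<noteq> 0" "x \<noteq> 0" and step: "\<And>y. y \<noteq> 0 \<Longrightarrow> P (p * y) \<longleftrightarrow> P y"
  shows "P (p powi k * x) \<longleftrightarrow> P x"
proof (induction k rule: int_induct[where k = 0])
  case (step1 i)
  have "p powi (i + 1) * x = p * (p powi i * x)"
    using assms(1) by (simp add: power_int_add_1' mult.assoc)
  then show ?case
    using step1 step[of "p powi i * x"] assms by (simp add: mult.assoc)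
next
  case (step2 i)
  have "p powi i * x = p * (p powi (i - 1) * x)"
    using assms(1) power_int_minus_mult[of p i] by (simp add: mult_ac)
  then show ?case
    using step2 step[of "p powi (i - 1) * x"] assms by (simp add: mult.assoc)
qed simp

lemma power_int_annulus_representative:
  fixes p x :: complex
  assumes p: "p \<noteq> 0" "norm p < 1" and x: "x \<noteq> 0"
  obtains n y where "x = p powi n * y" "norm p \<le> norm y" "norm y \<le> 1"
proof -
  define r where "r = norm p"
  have r: "0 < r" "r < 1" and ln_r: "ln r < 0"
    using p by (auto simp: r_def)
  define t where "t = ln (norm x) / ln r"
  define n where "n = \<lfloor>t\<rfloor>"
  define y where "y = x / p powi n"
  have "ln (norm y) = ln (norm x) - of_int n * ln r"
    using r x by (simp add: y_def norm_divide norm_power_int r_def ln_div powr_real_of_int'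
      flip: powr_real_of_int')
  also have "\<dots> = ln r * (t - of_int n)"
    using ln_r by (simp add: t_def field_simps)
  finally have ln_y: "ln (norm y) = ln r * (t - of_int n)" .
  have "0 \<le> t - of_int n" "t - of_int n < 1"
    unfolding n_def by linarith+
  then have "ln r \<le> ln (norm y)" "ln (norm y) \<le> 0"
    unfolding ln_y using ln_r by (auto simp: mult_le_0_iff intro: mult_le_cancel_left1)
  moreover have "norm y > 0"
    using p x by (simp add: y_def)
  ultimately have "norm p \<le> norm y" "norm y \<le> 1"
    using r by (auto simp: r_def ln_le_cancel_iff)
  moreover have "x = p powi n * y"
    using p by (simp add: y_def)
  ultimately show ?thesis using that by blast
qed

lemma deriv_at_zero_of_functional_equation:
  fixes F c :: "complex \<Rightarrow> complex"
  assumes "F holomorphic_on - {0}" "c holomorphic_on - {0}"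
    and F_eq: "\<And>y. y \<noteq> 0 \<Longrightarrow> F (p * y) = c y * F y"
    and "p \<noteq> 0" "x \<noteq> 0" "F x = 0"
  shows "p * deriv F (p * x) = c x * deriv F x"
proof -
  have "(F has_field_derivative deriv F (p * x)) (at (p * x))"
    using assms by (intro holomorphic_derivI[OF assms(1)]) (auto simp: open_Compl)
  then have "((\<lambda>y. F (p * y)) has_field_derivative deriv F (p * x) * p) (at x)"
    by (rule DERIV_chain2) (auto intro!: derivative_eq_intros)
  then have lhs: "((\<lambda>y. c y * F y) has_field_derivative deriv F (p * x) * p) (at x)"
    by (rule has_field_derivative_transform_within_open[where S = "- {0}"])
       (use assms in \<open>auto simp: open_Compl\<close>)
  have "((\<lambda>y. c y * F y) has_field_derivative deriv c x * F x + c x * deriv F x) (at x)"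
    using assms by (auto intro!: derivative_eq_intros holomorphic_derivI simp: open_Compl)
  from DERIV_unique[OF this lhs] show ?thesis
    using assms(6) by (simp add: mult.commute)
qed

lemma holomorphic_on_quotient_simple_zeros:
  fixes F D :: "complex \<Rightarrow> complex"
  assumes S: "open S" and hF: "F holomorphic_on S" and hD: "D holomorphic_on S"
    and zeros: "\<And>z. z \<in> S \<Longrightarrow> D z = 0 \<Longrightarrow> F z = 0 \<and> deriv D z \<noteq> 0"
  shows "(\<lambda>x. if D x = 0 then deriv F x / deriv D x else F x / D x) holomorphic_on S"
  unfolding holomorphic_on_open[OF S]
proof
  fix x0 assume x0: "x0 \<in> S"
  define R where "R = (\<lambda>x. if D x = 0 then deriv F x / deriv D x else F x / D x)"
  show "\<exists>f'. (R has_field_derivative f') (at x0)"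
  proof (cases "D x0 = 0")
    case False
    define S' where "S' = S \<inter> D -` (- {0})"
    have "((\<lambda>x. F x / D x) has_field_derivative
        (deriv F x0 * D x0 - F x0 * deriv D x0) / (D x0 * D x0)) (at x0)"
      using False x0 by (intro DERIV_divide holomorphic_derivI[OF hF S] holomorphic_derivI[OF hD S])
    moreover have "open S'"
      unfolding S'_def using S hD
      by (intro continuous_open_preimage holomorphic_on_imp_continuous_on) (auto simp: open_Compl)
    ultimately have "(R has_field_derivative
        (deriv F x0 * D x0 - F x0 * deriv D x0) / (D x0 * D x0)) (at x0)"
      by (rule has_field_derivative_transform_within_open[where S = S'])
         (use x0 False in \<open>auto simp: R_def S'_def\<close>)
    then show ?thesis by blast
  next
    case True
    \<comment> \<open>Near a zero, \<open>F / D\<close> is the quotient of the two difference quotients at \<open>x0\<close>.\<close>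
    define F1 where "F1 = (\<lambda>z. if z = x0 then deriv F x0 else (F z - F x0) / (z - x0))"
    define D1 where "D1 = (\<lambda>z. if z = x0 then deriv D x0 else (D z - D x0) / (z - x0))"
    have hF1: "F1 holomorphic_on S" and hD1: "D1 holomorphic_on S"
      unfolding F1_def D1_def by (intro pole_lemma_open hF hD S)+
    have F0: "F x0 = 0" and D1_x0: "D1 x0 \<noteq> 0"
      using zeros[OF x0 True] by (auto simp: D1_def)
    define S' where "S' = S \<inter> D1 -` (- {0})"
    have "((\<lambda>x. F1 x / D1 x) has_field_derivative
        (deriv F1 x0 * D1 x0 - F1 x0 * deriv D1 x0) / (D1 x0 * D1 x0)) (at x0)"
      using D1_x0 x0
      by (intro DERIV_divide holomorphic_derivI[OF hF1 S] holomorphic_derivI[OF hD1 S])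
    moreover have "open S'"
      unfolding S'_def using S hD1
      by (intro continuous_open_preimage holomorphic_on_imp_continuous_on) (auto simp: open_Compl)
    ultimately have "(R has_field_derivative
        (deriv F1 x0 * D1 x0 - F1 x0 * deriv D1 x0) / (D1 x0 * D1 x0)) (at x0)"
      by (rule has_field_derivative_transform_within_open[where S = S'])
         (use x0 D1_x0 True F0 in \<open>auto simp: S'_def F1_def D1_def R_def\<close>)
    then show ?thesis by blast
  qed
qed

lemma mult_periodic_holomorphic_constant:
  fixes R :: "complex \<Rightarrow> complex"
  assumes p: "p \<noteq> 0" "norm p < 1" and hR: "R holomorphic_on - {0}"
    and periodic: "\<And>x. x \<noteq> 0 \<Longrightarrow> R (p * x) = R x"
  obtains C where "\<And>x. x \<noteq> 0 \<Longrightarrow> R x = C"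
proof -
  define K where "K = {x::complex. norm p \<le> norm x \<and> norm x \<le> 1}"
  have "closed K"
    unfolding K_def by (intro closed_Collect_conj closed_Collect_le continuous_intros)
  moreover have "bounded K"
    unfolding K_def bounded_iff by auto
  ultimately have "compact K"
    by (simp add: compact_eq_bounded_closed)
  moreover have "K \<subseteq> - {0}"
    using p by (auto simp: K_def)
  ultimately have "compact (R ` K)"
    using hR by (intro compact_continuous_image holomorphic_on_imp_continuous_on
        holomorphic_on_subset[OF hR])
  then obtain M where M: "\<And>y. y \<in> K \<Longrightarrow> norm (R y) \<le> M"
    using compact_imp_bounded[of "R ` K"] unfolding bounded_iff by auto
  have "norm (R x) \<le> M" if x: "x \<noteq> 0" for x
  proof -
    obtain n y where y: "x = p powi n * y" "norm p \<le> norm y" "norm y \<le> 1"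
      using power_int_annulus_representative[OF p x] .
    have "y \<noteq> 0"
      using y p by auto
    then have "R x = R y"
      using power_int_mult_invariant[of p y "\<lambda>w. R w = R y" n] p periodic y(1) by simp
    then show ?thesis
      using M[of y] y by (simp add: K_def)
  qed
  then have "bounded (range (\<lambda>w. R (exp w)))"
    unfolding bounded_iff by (intro exI[of _ M]) auto
  moreover have "(\<lambda>w. R (exp w)) holomorphic_on UNIV"
    by (rule holomorphic_on_compose[OF holomorphic_on_exp, unfolded o_def,
          OF holomorphic_on_subset[OF hR]]) auto
  ultimately have "(\<lambda>w. R (exp w)) constant_on UNIV"
    by (rule Liouville_theorem[rotated])
  then obtain C where C: "\<And>w. R (exp w) = C"
    by (auto simp: constant_on_def)
  show ?thesis
  proof (rule that)
    fix x :: complex assume "x \<noteq> 0"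
    then show "R x = C" using C[of "Ln x"] by simp
  qed
qed

lemma quasi_periodic_proportional:
  fixes F D c :: "complex \<Rightarrow> complex"
  assumes p: "p \<noteq> 0" "norm p < 1"
    and hF: "F holomorphic_on - {0}" and hD: "D holomorphic_on - {0}"
    and hc: "c holomorphic_on - {0}" and c_nz: "\<And>x. x \<noteq> 0 \<Longrightarrow> c x \<noteq> 0"
    and F_eq: "\<And>x. x \<noteq> 0 \<Longrightarrow> F (p * x) = c x * F x"
    and D_eq: "\<And>x. x \<noteq> 0 \<Longrightarrow> D (p * x) = c x * D x"
    and zeros: "\<And>x. x \<noteq> 0 \<Longrightarrow> D x = 0 \<Longrightarrow> F x = 0 \<and> deriv D x \<noteq> 0"
  obtains C where "\<And>x. x \<noteq> 0 \<Longrightarrow> F x = C * D x"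
proof -
  \<comment> \<open>The quotient \<open>F / D\<close> extends holomorphically across the zeros of \<open>D\<close> and is \<open>p\<close>-periodic.\<close>
  define R where "R = (\<lambda>x. if D x = 0 then deriv F x / deriv D x else F x / D x)"
  have "R holomorphic_on - {0}"
    unfolding R_def using zeros
    by (intro holomorphic_on_quotient_simple_zeros hF hD) (auto simp: open_Compl)
  moreover have "R (p * x) = R x" if x: "x \<noteq> 0" for x
  proof (cases "D x = 0")
    case True
    have "p * deriv F (p * x) = c x * deriv F x"
      using zeros[OF x True] by (intro deriv_at_zero_of_functional_equation[OF hF hc F_eq p(1) x]) auto
    moreover have "p * deriv D (p * x) = c x * deriv D x"
      using True by (intro deriv_at_zero_of_functional_equation[OF hD hc D_eq p(1) x])
    ultimately have "deriv F (p * x) / deriv D (p * x) = deriv F x / deriv D x"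
      using c_nz[OF x] p(1) by (metis mult_divide_mult_cancel_left)
    then show ?thesis
      using True D_eq[OF x] by (simp add: R_def)
  qed (use x D_eq F_eq c_nz in \<open>simp add: R_def\<close>)
  ultimately obtain C where C: "\<And>x. x \<noteq> 0 \<Longrightarrow> R x = C"
    using mult_periodic_holomorphic_constant[OF p] by blast
  have "F x = C * D x" if "x \<noteq> 0" for x
    using C[OF that] zeros[OF that] by (auto simp: R_def split: if_splits)
  then show ?thesis using that by blast
qed

lemma vanishing_off_countable:
  fixes G :: "'a::euclidean_space \<Rightarrow> 'b::real_normed_vector"
  assumes "continuous_on S G" "open S" "countable B"
    and "\<And>w. w \<in> S \<Longrightarrow> w \<notin> B \<Longrightarrow> G w = 0" and "x \<in> S"
  shows "G x = 0"
proof (rule ccontr)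
  assume "G x \<noteq> 0"
  moreover have "open (S \<inter> G -` (- {0}))"
    using assms(1,2) by (intro continuous_open_preimage) (auto simp: open_Compl)
  ultimately obtain r where r: "r > 0" "ball x r \<subseteq> S \<inter> G -` (- {0})"
    using assms(5) by (auto elim!: openE)
  obtain w where "w \<in> ball x r" "w \<notin> B"
    using ball_minus_countable_nonempty[OF assms(3) r(1), of x] by blast
  moreover from this(1) have "w \<in> S" "G w \<noteq> 0"
    using r(2) by auto
  ultimately show False
    using assms(4) by blast
qed

section \<open>The theta function\<close>

lemma convergent_prod_qpoch:
  assumes "norm p < 1"
  shows "convergent_prod (\<lambda>k. 1 - x * p ^ k :: complex)"
proof -
  have "summable (\<lambda>k. norm x * norm p ^ k)"
    using assms by (intro summable_mult summable_geometric) auto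
  then have "summable (\<lambda>k. norm ((1 - x * p ^ k) - 1))"
    by (simp add: norm_mult norm_power)
  then show ?thesis
    by (intro abs_convergent_prod_imp_convergent_prod summable_imp_abs_convergent_prod)
qed

lemma qpoch_inf_has_prod:
  assumes "norm p < 1"
  shows "(\<lambda>k. 1 - x * p ^ k) has_prod qpoch_inf x p"
  unfolding qpoch_inf_def using convergent_prod_qpoch[OF assms] by blast

lemma qpoch_inf_eq_0_iff:
  assumes "norm p < 1"
  shows "qpoch_inf x p = 0 \<longleftrightarrow> (\<exists>k. x * p ^ k = 1)"
proof -
  have "qpoch_inf x p = 0 \<longleftrightarrow> 0 \<in> range (\<lambda>k. 1 - x * p ^ k)"
    by (rule has_prod_eq_0_iff[OF qpoch_inf_has_prod[OF assms]])
  then show ?thesis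
    by (metis (mono_tags, lifting) eq_iff_diff_eq_0 rangeE rangeI)
qed

lemma qpoch_inf_shift:
  assumes "norm p < 1"
  shows "qpoch_inf x p = (1 - x) * qpoch_inf (x * p) p"
proof (cases "x = 1")
  case True
  moreover have "qpoch_inf 1 p = 0"
    using qpoch_inf_eq_0_iff[OF assms, of 1] by (metis mult_1 power_0)
  ultimately show ?thesis by simp
next
  case False
  have "(\<lambda>k. 1 - x * p ^ Suc k) has_prod qpoch_inf (x * p) p"
    using qpoch_inf_has_prod[OF assms, of "x * p"] by (simp add: mult_ac)
  then have "(\<lambda>k. 1 - x * p ^ k) has_prod (qpoch_inf (x * p) p * (1 - x))"
    using has_prod_Suc_iff[of "\<lambda>k. 1 - x * p ^ k"] False by simp
  then show ?thesis
    using has_prod_unique2[OF _ qpoch_inf_has_prod[OF assms]] by (simp add: mult_ac)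
qed

lemma qpoch_inf_p_p_nonzero:
  assumes "norm p < 1"
  shows "qpoch_inf p p \<noteq> 0"
proof -
  have "norm (p * p ^ k) < 1" for k
    using assms by (simp add: norm_mult norm_power power_less_one_iff flip: power_Suc)
  then have "p * p ^ k \<noteq> 1" for k
    by (metis norm_one order.irrefl)
  then show ?thesis
    using qpoch_inf_eq_0_iff[OF assms, of p] by (simp add: mult.commute)
qed

lemma holomorphic_qpoch_inf:
  assumes "norm p < 1"
  shows "(\<lambda>x. qpoch_inf x p) holomorphic_on A"
proof (cases "p = 0")
  case True
  then have "qpoch_inf x p = 1 - x" for x
    using qpoch_inf_shift[OF assms, of x] by (simp add: qpoch_inf_def)
  then show ?thesis by (auto intro!: holomorphic_intros)
next
  case False
  \<comment> \<open>The partial products are those of the Weierstrass product with zeros at \<open>p\<^sup>-\<^sup>n\<close> and genus 0.\<close>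
  interpret weierstrass_product "\<lambda>n. inverse (p ^ n)" "\<lambda>_. 0"
  proof
    have "filterlim (\<lambda>n. p ^ n) (at 0) sequentially"
      using assms False by (intro filterlim_atI LIMSEQ_power_zero) auto
    then show "filterlim (\<lambda>n. inverse (p ^ n)) at_infinity at_top"
      by (rule filterlim_compose[OF filterlim_inverse_at_infinity])
    show "summable (\<lambda>n. (r / norm (inverse (p ^ n))) ^ Suc 0)" for r
      using assms by (simp add: norm_inverse norm_power divide_inverse summable_mult summable_geometric)
  qed (use False in auto)
  have "weierstrass_factor 0 (x / inverse (p ^ n)) = 1 - x * p ^ n" for x n
    by (simp add: weierstrass_factor_def divide_inverse)
  then have "(\<lambda>x. qpoch_inf x p) = f"
    by (simp add: fun_eq_iff f_def qpoch_inf_def)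
  then show ?thesis
    using holomorphic by simp
qed

lemma theta_p_0: "theta x 0 = 1 - x"
  using qpoch_inf_shift[of 0 x] by (simp add: theta_def qpoch_inf_def)

lemma theta_inverse:
  assumes "norm p < 1" "x \<noteq> 0"
  shows "theta (1 / x) p = - (1 / x) * theta x p"
proof -
  define A where "A = qpoch_inf (p * x) p * qpoch_inf (p / x) p"
  have "qpoch_inf (1 / x) p = (1 - 1 / x) * qpoch_inf (p / x) p"
    using qpoch_inf_shift[OF assms(1), of "1 / x"] by simp
  then have "theta (1 / x) p = (1 - 1 / x) * A"
    by (simp add: theta_def A_def mult_ac)
  moreover have "qpoch_inf x p = (1 - x) * qpoch_inf (p * x) p"
    using qpoch_inf_shift[OF assms(1), of x] by (simp add: mult.commute)
  then have "theta x p = (1 - x) * A"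
    by (simp add: theta_def A_def)
  moreover have "1 - 1 / x = - (1 / x) * (1 - x)"
    using assms(2) by (simp add: field_simps)
  ultimately show ?thesis by simp
qed

lemma theta_mult_p:
  assumes "norm p < 1" "x \<noteq> 0" "p \<noteq> 0"
  shows "theta (p * x) p = - (1 / x) * theta x p"
proof -
  have "theta (p * x) p = theta (1 / x) p"
    using assms by (simp add: theta_def mult.commute)
  then show ?thesis
    using theta_inverse[OF assms(1,2)] by simp
qed

lemma holomorphic_theta:
  assumes "norm p < 1"
  shows "(\<lambda>z. theta z p) holomorphic_on - {0}"
  unfolding theta_def
  by (intro holomorphic_intros holomorphic_on_compose[OF _ holomorphic_qpoch_inf[OF assms],
        unfolded o_def]) auto

lemma holomorphic_on_theta_compose:
  assumes "norm p < 1" "f holomorphic_on S" "\<And>z. z \<in> S \<Longrightarrow> f z \<noteq> 0"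
  shows "(\<lambda>z. theta (f z) p) holomorphic_on S"
  by (rule holomorphic_on_compose_gen[OF assms(2) holomorphic_theta[OF assms(1)], unfolded o_def])
     (use assms(3) in auto)

lemma theta_zero_imp_power_int:
  assumes "norm p < 1" "p \<noteq> 0" "x \<noteq> 0" "theta x p = 0"
  shows "x \<in> range (power_int p)"
proof -
  have "qpoch_inf x p = 0 \<or> qpoch_inf (p / x) p = 0"
    using assms(4) by (simp add: theta_def)
  then show ?thesis
  proof
    assume "qpoch_inf x p = 0"
    then obtain k where "x * p ^ k = 1"
      using qpoch_inf_eq_0_iff[OF assms(1)] by blast
    then have "x = p powi (- int k)"
      using assms(2) by (simp add: power_int_minus field_simps)
    then show ?thesis by blast
  next
    assume "qpoch_inf (p / x) p = 0"
    then obtain k where "p / x * p ^ k = 1"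
      using qpoch_inf_eq_0_iff[OF assms(1)] by blast
    then have "x = p ^ Suc k"
      using assms(3) by (simp add: field_simps)
    then show ?thesis
      by (metis power_int_of_nat rangeI)
  qed
qed

lemma theta_1: "norm p < 1 \<Longrightarrow> theta 1 p = 0"
  using qpoch_inf_eq_0_iff[of p 1] by (auto simp: theta_def intro: exI[of _ 0])

lemma deriv_theta_1:
  assumes "norm p < 1"
  shows "deriv (\<lambda>z. theta z p) 1 = - (qpoch_inf p p)\<^sup>2"
proof -
  define H where "H = (\<lambda>z. qpoch_inf (z * p) p * qpoch_inf (p / z) p)"
  have "H holomorphic_on - {0}"
    unfolding H_def by (intro holomorphic_intros holomorphic_on_compose[OF _
        holomorphic_qpoch_inf[OF assms], unfolded o_def]) auto
  then have "(H has_field_derivative deriv H 1) (at 1)"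
    by (rule holomorphic_derivI) (auto simp: open_Compl)
  then have "((\<lambda>z. (1 - z) * H z) has_field_derivative - H 1) (at 1)"
    by (auto intro!: derivative_eq_intros)
  moreover have "theta z p = (1 - z) * H z" for z
    unfolding theta_def H_def qpoch_inf_shift[OF assms, of z] by (simp add: mult_ac)
  ultimately show ?thesis
    by (intro DERIV_imp_deriv) (simp add: H_def power2_eq_square)
qed

lemma theta_power_int_simple_zero:
  assumes "norm p < 1" "p \<noteq> 0"
  shows "theta (p powi k) p = 0 \<and> deriv (\<lambda>z. theta z p) (p powi k) \<noteq> 0"
proof -
  let ?P = "\<lambda>w. theta w p = 0 \<and> deriv (\<lambda>z. theta z p) w \<noteq> 0"
  have "?P (p * w) \<longleftrightarrow> ?P w" if "w \<noteq> 0" for w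
  proof (cases "theta w p = 0")
    case True
    have "p * deriv (\<lambda>z. theta z p) (p * w) = - (1 / w) * deriv (\<lambda>z. theta z p) w"
      by (rule deriv_at_zero_of_functional_equation[OF holomorphic_theta[OF assms(1)] _
            theta_mult_p[OF assms(1) _ assms(2)] assms(2) that True])
         (auto intro!: holomorphic_intros)
    then have "deriv (\<lambda>z. theta z p) (p * w) = - deriv (\<lambda>z. theta z p) w / (p * w)"
      using that assms(2) by (simp add: field_simps)
    then show ?thesis
      using True that assms by (simp add: theta_mult_p)
  qed (use that assms in \<open>simp add: theta_mult_p\<close>)
  moreover have "?P 1"
    using theta_1 deriv_theta_1 qpoch_inf_p_p_nonzero assms(1) by simp
  ultimately show ?thesis
    using power_int_mult_invariant[of p 1 ?P k] assms(2) by simp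
qed

section \<open>Weierstrass' addition formula\<close>

definition theta_pair :: "complex \<Rightarrow> complex \<Rightarrow> complex \<Rightarrow> complex" where
  "theta_pair a x p = theta (x * a) p * theta (x / a) p"

lemma holomorphic_theta_pair:
  assumes "norm p < 1" "a \<noteq> 0"
  shows "(\<lambda>x. theta_pair a x p) holomorphic_on - {0}"
  unfolding theta_pair_def using assms
  by (intro holomorphic_intros holomorphic_on_theta_compose) auto

lemma theta_pair_mult_p:
  assumes "norm p < 1" "p \<noteq> 0" "a \<noteq> 0" "x \<noteq> 0"
  shows "theta_pair a (p * x) p = 1 / (x * x) * theta_pair a x p"
proof -
  have times_a: "theta (p * x * a) p = - (1 / (x * a)) * theta (x * a) p"
    using theta_mult_p[of p "x * a"] assms by (simp add: mult.assoc)
  have divide_a: "theta (p * x / a) p = - (1 / (x / a)) * theta (x / a) p"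
    using theta_mult_p[of p "x / a"] assms by (simp add: times_divide_eq_right)
  show ?thesis
    unfolding theta_pair_def times_a divide_a using assms by (simp add: field_simps)
qed

lemma theta_pair_inverse:
  assumes "norm p < 1" "a \<noteq> 0" "x \<noteq> 0"
  shows "theta_pair a (1 / x) p = 1 / (x * x) * theta_pair a x p"
proof -
  have times_a: "theta (1 / x * a) p = - (a / x) * theta (x / a) p"
    using theta_inverse[OF assms(1), of "x / a"] assms by simp
  have divide_a: "theta (1 / x / a) p = - (1 / (x * a)) * theta (x * a) p"
    using theta_inverse[OF assms(1), of "x * a"] assms by (simp add: divide_divide_eq_left)
  show ?thesis
    unfolding theta_pair_def times_a divide_a using assms by (simp add: field_simps)
qed

lemma deriv_theta_pair:
  assumes "norm p < 1" "a \<noteq> 0" "x \<noteq> 0"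
  shows "deriv (\<lambda>x. theta_pair a x p) x =
    a * deriv (\<lambda>z. theta z p) (x * a) * theta (x / a) p
      + 1 / a * deriv (\<lambda>z. theta z p) (x / a) * theta (x * a) p"
proof -
  have theta': "((\<lambda>z. theta z p) has_field_derivative deriv (\<lambda>z. theta z p) w) (at w)"
    if "w \<noteq> 0" for w
    using that by (intro holomorphic_derivI[OF holomorphic_theta[OF assms(1)]]) (auto simp: open_Compl)
  have "((\<lambda>x. theta (x * a) p) has_field_derivative deriv (\<lambda>z. theta z p) (x * a) * a) (at x)"
    using assms by (intro DERIV_chain2[OF theta']) (auto intro!: derivative_eq_intros)
  moreover have "((\<lambda>x. theta (x / a) p) has_field_derivative
      deriv (\<lambda>z. theta z p) (x / a) * (1 / a)) (at x)"
    using assms by (intro DERIV_chain2[OF theta']) (auto intro!: derivative_eq_intros)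
  ultimately have "((\<lambda>x. theta_pair a x p) has_field_derivative
      deriv (\<lambda>z. theta z p) (x * a) * a * theta (x / a) p
        + deriv (\<lambda>z. theta z p) (x / a) * (1 / a) * theta (x * a) p) (at x)"
    unfolding theta_pair_def by (auto intro!: derivative_eq_intros)
  then show ?thesis
    by (intro DERIV_imp_deriv) (simp add: mult_ac)
qed

lemma theta_pair_zero:
  assumes p: "norm p < 1" "p \<noteq> 0" and "u \<noteq> 0" "x \<noteq> 0"
    and u: "u * u \<notin> range (power_int p)" and zero: "theta_pair u x p = 0"
  shows "(\<exists>k. x = p powi k * u \<or> x = p powi k * (1 / u))
    \<and> deriv (\<lambda>x. theta_pair u x p) x \<noteq> 0"
proof -
  have "\<not> (theta (x * u) p = 0 \<and> theta (x / u) p = 0)"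
  proof
    assume "theta (x * u) p = 0 \<and> theta (x / u) p = 0"
    then obtain k j where "x * u = p powi k" "x / u = p powi j"
      using theta_zero_imp_power_int[OF p] assms by (metis divide_eq_0_iff mult_eq_0_iff rangeE)
    then have "u * u = p powi (k - j)"
      using assms by (simp add: power_int_diff field_simps)
    with u show False by blast
  qed
  moreover have "theta (x * u) p = 0 \<or> theta (x / u) p = 0"
    using zero by (simp add: theta_pair_def)
  ultimately consider
      k where "x * u = p powi k" "theta (x * u) p = 0" "theta (x / u) p \<noteq> 0"
    | k where "x / u = p powi k" "theta (x / u) p = 0" "theta (x * u) p \<noteq> 0"
    using theta_zero_imp_power_int[OF p] assms by (metis divide_eq_0_iff mult_eq_0_iff rangeE)
  then show ?thesis
  proof cases
    case (1 k)
    then have "x = p powi k * (1 / u)"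
      using assms by (simp add: field_simps)
    then show ?thesis
      using 1 assms theta_power_int_simple_zero[OF p, of k] by (auto simp: deriv_theta_pair[OF p(1)])
  next
    case (2 k)
    then have "x = p powi k * u"
      using assms by (simp add: field_simps)
    then show ?thesis
      using 2 assms theta_power_int_simple_zero[OF p, of k] by (auto simp: deriv_theta_pair[OF p(1)])
  qed
qed

lemma theta_addition_formula_generic:
  assumes p: "norm p < 1" "p \<noteq> 0" and nz: "x \<noteq> 0" "y \<noteq> 0" "u \<noteq> 0" "v \<noteq> 0"
    and u: "u * u \<notin> range (power_int p)" and y: "theta_pair u y p \<noteq> 0"
  shows "theta_pair y x p * theta_pair v u p - theta_pair v x p * theta_pair y u p
    = u / y * theta_pair v y p * theta_pair u x p"
proof -
  \<comment> \<open>In \<open>x\<close>, the difference of the two sides satisfies the same functional equation as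
    \<open>theta_pair u x p\<close> and vanishes at its zeros, so it is a multiple of it; it also vanishes at \<open>y\<close>.\<close>
  define F where "F = (\<lambda>x. theta_pair v u p * theta_pair y x p - theta_pair y u p * theta_pair v x p
    - u / y * theta_pair v y p * theta_pair u x p)"
  have F_eq: "F (p * w) = 1 / (w * w) * F w" if "w \<noteq> 0" for w
    using that p nz by (simp add: F_def theta_pair_mult_p algebra_simps)
  have F_u: "F u = 0"
    using theta_1[OF p(1)] nz by (simp add: F_def theta_pair_def mult_ac)
  have swap: "theta (y / u) p = - (y / u) * theta (u / y) p"
    using theta_inverse[OF p(1), of "u / y"] nz by simp
  have F_y: "F y = 0"
    unfolding F_def theta_pair_def swap using theta_1[OF p(1)] nz by (simp add: field_simps)
  have "F (1 / u) = 0"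
    using F_u nz p by (simp add: F_def theta_pair_inverse algebra_simps)
  then have F_zeros: "F (p powi k * w) = 0" if "w = u \<or> w = 1 / u" for k w
    using power_int_mult_invariant[of p w "\<lambda>w. F w = 0" k] that F_u F_eq nz p by auto
  have "F holomorphic_on - {0}"
    unfolding F_def using p nz by (intro holomorphic_intros holomorphic_theta_pair)
  moreover have "(\<lambda>x. 1 / (x * x)) holomorphic_on - {0}"
    by (auto intro!: holomorphic_intros)
  moreover have "F w = 0 \<and> deriv (\<lambda>x. theta_pair u x p) w \<noteq> 0"
    if "w \<noteq> 0" "theta_pair u w p = 0" for w
    using theta_pair_zero[OF p nz(3) that(1) u that(2)] F_zeros[of u] F_zeros[of "1 / u"] by blast
  ultimately obtain C where C: "\<And>w. w \<noteq> 0 \<Longrightarrow> F w = C * theta_pair u w p"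
    using quasi_periodic_proportional[OF p(2,1) _ holomorphic_theta_pair[OF p(1) nz(3)] _ _ F_eq
        theta_pair_mult_p[OF p nz(3)]] by auto
  then have "C = 0"
    using F_y y nz by simp
  then show ?thesis
    using C[OF nz(1)] by (simp add: F_def algebra_simps)
qed

lemma theta_addition_formula_0:
  fixes x y u v :: complex
  assumes "x \<noteq> 0" "y \<noteq> 0" "u \<noteq> 0" "v \<noteq> 0"
  shows "theta_pair y x 0 * theta_pair v u 0 - theta_pair v x 0 * theta_pair y u 0
    = u / y * theta_pair v y 0 * theta_pair u x 0"
  unfolding theta_pair_def theta_p_0 using assms by (simp add: field_simps)

lemma theta_addition_formula:
  assumes p: "norm p < 1" and nz: "x \<noteq> 0" "y \<noteq> 0" "u \<noteq> 0" "v \<noteq> 0"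
  shows "theta_pair y x p * theta_pair v u p - theta_pair v x p * theta_pair y u p
    = u / y * theta_pair v y p * theta_pair u x p"
proof (cases "p = 0")
  case True
  then show ?thesis
    using theta_addition_formula_0[OF nz] by simp
next
  case False
  \<comment> \<open>The generic case covers all \<open>u\<close> outside a countable set; continuity in \<open>u\<close> does the rest.\<close>
  define Z where "Z = range (power_int p)"
  define B where "B = {w. w * w \<in> Z \<or> y * w \<in> Z \<or> y / w \<in> Z}"
  have "countable B"
  proof (rule countable_subset)
    have sqrt: "w = csqrt z \<or> w = - csqrt z" if "w * w = z" for w z
      using power2_eq_iff[of w "csqrt z"] power2_csqrt[of z] that by (simp add: power2_eq_square)
    then show "B \<subseteq> {0} \<union> (\<Union>z\<in>Z. {csqrt z, - csqrt z, z / y, y / z})"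
    proof (intro subsetI)
      fix w assume "w \<in> B"
      then consider "w * w \<in> Z" | "y * w \<in> Z" | "y / w \<in> Z" "w \<noteq> 0" | "w = 0"
        unfolding B_def by blast
      then show "w \<in> {0} \<union> (\<Union>z\<in>Z. {csqrt z, - csqrt z, z / y, y / z})"
      proof cases
        case 1
        then show ?thesis
          using sqrt[of w "w * w"] by blast
      next
        case 2
        moreover have "w = y * w / y"
          using nz(2) by simp
        ultimately show ?thesis
          by blast
      next
        case 3
        moreover have "w = y / (y / w)"
          using 3 nz(2) by simp
        ultimately show ?thesis
          by blast
      qed simp
    qed
    show "countable ({0} \<union> (\<Union>z\<in>Z. {csqrt z, - csqrt z, z / y, y / z}))"
      by (simp add: Z_def)
  qed
  define G where "G = (\<lambda>w. theta_pair y x p * theta_pair v w p - theta_pair v x p * theta_pair y w p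
    - w / y * theta_pair v y p * theta_pair w x p)"
  have cont: "continuous_on (- {0}) G"
    unfolding G_def theta_pair_def using p nz
    by (intro holomorphic_on_imp_continuous_on holomorphic_intros holomorphic_on_theta_compose) auto
  have generic: "G w = 0" if "w \<in> - {0}" "w \<notin> B" for w
  proof -
    have "theta (y * w) p \<noteq> 0" "theta (y / w) p \<noteq> 0"
      using that theta_zero_imp_power_int[OF p False, of "y * w"]
        theta_zero_imp_power_int[OF p False, of "y / w"] nz(2) by (auto simp: B_def Z_def)
    then have "theta_pair w y p \<noteq> 0"
      by (simp add: theta_pair_def)
    then show ?thesis
      using theta_addition_formula_generic[OF p False nz(1,2) _ nz(4)] that
      by (simp add: G_def B_def Z_def)
  qed
  have "G u = 0"
    using nz(3) by (intro vanishing_off_countable[OF cont _ \<open>countable B\<close> generic]) (auto simp: open_Compl)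
  then show ?thesis
    by (simp add: G_def)
qed

section \<open>The summand identity\<close>

text \<open>Each variable stands for \<open>\<theta>\<close> at the argument its name abbreviates: \<open>A\<close> for \<open>a\<close>,
  \<open>Bc\<close> for \<open>a/bc\<close>, \<open>Ab\<close> for \<open>a/b\<close>, \<open>Abcd\<close> for \<open>a/bcd\<close>, \<open>H\<close> for \<open>a\<^sup>2/bcd\<close>, \<open>He\<close> for
  \<open>a\<^sup>2/bcde\<close>, \<open>Hef\<close> for \<open>a\<^sup>2/bcdef\<close>, \<open>Aef\<close> for \<open>a/ef\<close>, \<open>Ief\<close> for \<open>bcdef/a\<^sup>2\<close>, \<open>tb\<close> for \<open>b\<close>;
  \<open>k = a/bcd\<close> and \<open>s = a/ef\<close>.\<close>

lemma summand_algebra: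
  fixes k s A Bc Bd Cd Ab Ac Ad Ae Af Abcd H He Hf Hg Hef Aef Ief tb tc td te tf tg :: "'a::field"
  assumes nz: "Ab \<noteq> 0" "Ac \<noteq> 0" "Ad \<noteq> 0" "Ae \<noteq> 0" "Af \<noteq> 0" "H \<noteq> 0" "He \<noteq> 0" "Hf \<noteq> 0"
      "Hg \<noteq> 0" "Hef \<noteq> 0"
    and E1: "A * Bc * Bd * Cd - Ab * Ac * Ad * Abcd = k * tb * tc * td * H"
    and E2: "A * Aef * He * Hf - Ae * Af * H * Hef = - s * te * tf * tg * Abcd"
    and Aef: "Aef = - s * Hg" and Hef: "Hef = - s * k * Ief"
  shows "A * Aef * He * Hf / (Hef * H * Af * Ae)
      * (1 - Bc * Bd * Cd / (Ad * Ac * Ab) * (te * tf * tg / (He * Hf * Hg)))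
    = 1 - tb * tc * td * te * tf * tg / (Ab * Ac * Ad * Ae * Af * Ief)"
proof -
  \<comment> \<open>With \<open>U\<close>, \<open>V\<close> the two factors on the left and \<open>z\<close> the quotient on the right,
    \<open>E2\<close> computes \<open>1 - U\<close> and \<open>E1\<close> computes \<open>z - U V\<close>.\<close>
  have "s \<noteq> 0" "k \<noteq> 0" "Ief \<noteq> 0"
    using Hef nz(10) by auto
  then show ?thesis
    using nz E1 E2 unfolding Aef Hef by (simp add: field_simps) algebra
qed

lemma theta_quartic_identity:
  assumes p: "norm p < 1" and nz: "a \<noteq> 0" "b \<noteq> 0" "c \<noteq> 0" "d \<noteq> 0"
  shows "theta a p * theta (a / (b * c)) p * theta (a / (b * d)) p * theta (a / (c * d)) p
      - theta (a / b) p * theta (a / c) p * theta (a / d) p * theta (a / (b * c * d)) p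
    = a / (b * c * d) * theta b p * theta c p * theta d p * theta (a\<^sup>2 / (b * c * d)) p"
proof -
  obtain r where "r * r = b * c"
    by (metis power2_csqrt power2_eq_square)
  then have r: "r \<noteq> 0" and b: "b = r * r / c"
    using nz by auto
  have args: "a / r * r = a" "a / r / r = a / (b * c)" "a / (r * d) * (c / r) = a / (b * d)"
    "a / (r * d) / (c / r) = a / (c * d)" "a / r * (c / r) = a / b" "a / r / (c / r) = a / c"
    "a / (r * d) * r = a / d" "a / (r * d) / r = a / (b * c * d)" "r * (c / r) = c" "r / (c / r) = b"
    "a / r * (a / (r * d)) = a\<^sup>2 / (b * c * d)" "a / r / (a / (r * d)) = d"
    using nz r unfolding b by (simp_all add: field_simps power2_eq_square)
  have "theta_pair r (a / r) p * theta_pair (c / r) (a / (r * d)) p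
      - theta_pair (c / r) (a / r) p * theta_pair r (a / (r * d)) p
    = a / (r * d) / r * theta_pair (c / r) r p * theta_pair (a / (r * d)) (a / r) p"
    using p nz r by (intro theta_addition_formula) auto
  then show ?thesis
    unfolding theta_pair_def args by (simp add: mult_ac)
qed

lemma theta_summand_identity:
  fixes a b c d e f g p :: complex
  assumes p: "norm p < 1"
    and nz: "a \<noteq> 0" "b \<noteq> 0" "c \<noteq> 0" "d \<noteq> 0" "e \<noteq> 0" "f \<noteq> 0" "g \<noteq> 0"
    and balanced: "a ^ 3 = b * c * d * e * f * g"
    and wd1: "thetas [a / b, a / c, a / d, a / e, a / f, b * c * d * e * f / a ^ 2] p \<noteq> 0"
    and wd2: "thetas [a ^ 2 / (b * c * d * e * f), a ^ 2 / (b * c * d), a / f, a / e] p \<noteq> 0"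
    and wd3: "thetas [a / d, a / c, a / b] p \<noteq> 0"
    and wd4: "thetas [a ^ 2 / (b * c * d * e), a ^ 2 / (b * c * d * f), a ^ 2 / (b * c * d * g)] p \<noteq> 0"
  shows "thetas [a, a / (e * f), a ^ 2 / (b * c * d * e), a ^ 2 / (b * c * d * f)] p
          / thetas [a ^ 2 / (b * c * d * e * f), a ^ 2 / (b * c * d), a / f, a / e] p
          * (1 - thetas [a / (b * c), a / (b * d), a / (c * d)] p / thetas [a / d, a / c, a / b] p
               * (thetas [e, f, g] p / thetas [a ^ 2 / (b * c * d * e), a ^ 2 / (b * c * d * f),
                                                a ^ 2 / (b * c * d * g)] p))
       = 1 - thetas [b, c, d, e, f, a ^ 3 / (b * c * d * e * f)] p
             / thetas [a / b, a / c, a / d, a / e, a / f, b * c * d * e * f / a ^ 2] p"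
proof -
  define s where "s = a / (e * f)"
  have g: "a ^ 3 / (b * c * d * e * f) = g"
    using balanced nz by (simp add: field_simps)
  have E2: "theta a p * theta (a / (e * f)) p * theta (a\<^sup>2 / (b * c * d * e)) p
      * theta (a\<^sup>2 / (b * c * d * f)) p
      - theta (a / e) p * theta (a / f) p * theta (a\<^sup>2 / (b * c * d)) p
      * theta (a\<^sup>2 / (b * c * d * e * f)) p
    = - s * theta e p * theta f p * theta g p * theta (a / (b * c * d)) p"
  proof -
    have args: "a / (e * (b * c * d / a)) = a\<^sup>2 / (b * c * d * e)"
      "a / (f * (b * c * d / a)) = a\<^sup>2 / (b * c * d * f)" "a / (b * c * d / a) = a\<^sup>2 / (b * c * d)"
      "a / (e * f * (b * c * d / a)) = a\<^sup>2 / (b * c * d * e * f)"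
      "a\<^sup>2 / (e * f * (b * c * d / a)) = g"
      using nz g by (simp_all add: field_simps power2_eq_square power3_eq_cube)
    have inverse: "theta (b * c * d / a) p = - (b * c * d / a) * theta (a / (b * c * d)) p"
      using theta_inverse[OF p, of "a / (b * c * d)"] nz by simp
    from theta_quartic_identity[OF p nz(1,5,6), of "b * c * d / a"] show ?thesis
      unfolding args inverse using nz by (simp add: s_def field_simps) algebra
  qed
  have "1 / (a\<^sup>2 / (b * c * d * g)) = s"
    using balanced nz by (simp add: s_def field_simps power2_eq_square power3_eq_cube)
  then have inv1: "theta (a / (e * f)) p = - s * theta (a\<^sup>2 / (b * c * d * g)) p"
    using theta_inverse[OF p, of "a\<^sup>2 / (b * c * d * g)"] nz by (simp add: s_def)
  have inv2: "theta (a\<^sup>2 / (b * c * d * e * f)) p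
      = - s * (a / (b * c * d)) * theta (b * c * d * e * f / a\<^sup>2) p"
    using theta_inverse[OF p, of "b * c * d * e * f / a\<^sup>2"] nz
    by (simp add: s_def field_simps power2_eq_square)
  have nonzero: "theta (a / b) p \<noteq> 0" "theta (a / c) p \<noteq> 0" "theta (a / d) p \<noteq> 0"
    "theta (a / e) p \<noteq> 0" "theta (a / f) p \<noteq> 0" "theta (a\<^sup>2 / (b * c * d)) p \<noteq> 0"
    "theta (a\<^sup>2 / (b * c * d * e)) p \<noteq> 0" "theta (a\<^sup>2 / (b * c * d * f)) p \<noteq> 0"
    "theta (a\<^sup>2 / (b * c * d * g)) p \<noteq> 0" "theta (a\<^sup>2 / (b * c * d * e * f)) p \<noteq> 0"
    using wd1 wd2 wd3 wd4 by (simp_all add: thetas_def)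
  show ?thesis
    using summand_algebra[OF nonzero theta_quartic_identity[OF p nz(1-4)] E2 inv1 inv2]
    unfolding g by (simp add: thetas_def mult_ac)
qed

section \<open>Telescoping the bilateral series\<close>

lemma gprod_add_1:
  assumes "\<And>j. z j \<noteq> 0"
  shows "gprod z (k + 1) = gprod z k * z k"
proof -
  consider "k \<ge> 0" | "k = -1" | "k < -1" by linarith
  then show ?thesis
  proof cases
    case 1
    then have "{0..<k + 1} = insert k {0..<k}" by auto
    then show ?thesis using 1 by (simp add: gprod_def mult.commute)
  next
    case 2
    then show ?thesis using assms[of "-1"] by (simp add: gprod_def)
  next
    case 3
    then have "{k..-1} = insert k {k + 1..-1}" by auto
    then have "gprod z k * z k = inverse (z k * (\<Prod>j\<in>{k + 1..-1}. z j)) * z k"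
      using 3 by (simp add: gprod_def)
    also have "\<dots> = inverse (\<Prod>j\<in>{k + 1..-1}. z j)"
      using assms[of k] by (simp add: field_simps)
    finally show ?thesis
      using 3 by (simp add: gprod_def)
  qed
qed

lemma gprod_of_nat: "gprod z (int n) = (\<Prod>i<n. z (int i))"
proof (induction n)
  case (Suc n)
  have "{0..<int (Suc n)} = insert (int n) {0..<int n}" by auto
  then show ?case using Suc by (simp add: gprod_def mult.commute)
qed (simp add: gprod_def)

lemma gprod_minus_of_nat: "gprod z (- int m) = (\<Prod>i<m. inverse (z (- int i - 1)))"
proof -
  have "gprod z (- int m) = inverse (\<Prod>j\<in>{- int m..-1}. z j)"
    by (cases m) (simp_all add: gprod_def)
  also have "\<dots> = (\<Prod>i<m. inverse (z (- int i - 1)))"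
  proof (induction m)
    case (Suc m)
    have "{- int (Suc m)..-1} = insert (- int m - 1) {- int m..-1}" by auto
    then show ?case using Suc by (simp add: mult.commute)
  qed simp
  finally show ?thesis .
qed

lemma sum_int_telescope:
  fixes h :: "int \<Rightarrow> 'a::ab_group_add"
  shows "(\<Sum>k\<in>{i..i + int N}. h k - h (k + 1)) = h i - h (i + int N + 1)"
proof (induction N)
  case (Suc N)
  have "{i..i + int (Suc N)} = insert (i + int N + 1) {i..i + int N}" by auto
  then show ?case using Suc by (simp add: algebra_simps)
qed simp

lemma sum_int_interval_split:
  fixes f :: "int \<Rightarrow> 'a::comm_monoid_add"
  shows "(\<Sum>k\<in>{- int m..int n}. f k) = (\<Sum>i<m. f (- int i - 1)) + (\<Sum>k\<le>n. f (int k))"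
proof (induction m)
  case 0
  have "{0..int n} = int ` {..n}"
    by (simp add: image_int_atLeastAtMost flip: atLeast0AtMost)
  then show ?case by (simp add: sum.reindex)
next
  case (Suc m)
  have "{- int (Suc m)..int n} = insert (- int m - 1) {- int m..int n}" by auto
  then show ?case using Suc by (simp add: algebra_simps)
qed

lemma convergent_of_tendsto_sum_prod_sequentially:
  fixes A B :: "nat \<Rightarrow> 'a::banach"
  assumes lim: "((\<lambda>(m, n). A m + B n) \<longlongrightarrow> L) (sequentially \<times>\<^sub>F sequentially)"
  shows "convergent A"
proof -
  have "Cauchy A"
  proof (rule metric_CauchyI)
    fix e :: real assume "e > 0"
    then have "\<forall>\<^sub>F (m, n) in sequentially \<times>\<^sub>F sequentially. dist (A m + B n) L < e / 2"
      using tendstoD[OF lim, of "e / 2"] by (simp add: case_prod_unfold)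
    then obtain N where N: "\<And>m n. m \<ge> N \<Longrightarrow> n \<ge> N \<Longrightarrow> dist (A m + B n) L < e / 2"
      unfolding eventually_prod_sequentially by blast
    have "dist (A m) (A n) < e" if "m \<ge> N" "n \<ge> N" for m n
      using dist_triangle_half_l[OF N[OF that(1) order.refl] N[OF that(2) order.refl]]
      by (simp add: dist_add_cancel2)
    then show "\<exists>M. \<forall>m\<ge>M. \<forall>n\<ge>M. dist (A m) (A n) < e" by blast
  qed
  then show ?thesis
    by (simp add: Cauchy_convergent_iff)
qed

lemma bilateral_sums_imp_summable:
  assumes "bilateral_sums f L"
  shows "summable (\<lambda>i. f (- int i - 1))" "summable (\<lambda>i. f (int i))"
proof -
  define A where "A = (\<lambda>m. \<Sum>i<m. f (- int i - 1))"
  define B where "B = (\<lambda>n. \<Sum>k\<le>n. f (int k))"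
  have lim: "((\<lambda>(m, n). A m + B n) \<longlongrightarrow> L) (sequentially \<times>\<^sub>F sequentially)"
    using assms unfolding bilateral_sums_def sum_int_interval_split A_def B_def .
  then have "convergent A"
    by (rule convergent_of_tendsto_sum_prod_sequentially)
  then show "summable (\<lambda>i. f (- int i - 1))"
    by (simp add: summable_iff_convergent A_def)
  have "((\<lambda>(m, n). A m + B n) \<longlongrightarrow> L) (filtermap prod.swap (sequentially \<times>\<^sub>F sequentially))"
    using lim by (metis prod_filter_commute)
  then have "((\<lambda>(n, m). B n + A m) \<longlongrightarrow> L) (sequentially \<times>\<^sub>F sequentially)"
    by (simp add: filterlim_filtermap case_prod_unfold add.commute)
  then have "convergent B"
    by (rule convergent_of_tendsto_sum_prod_sequentially)
  then show "summable (\<lambda>i. f (int i))"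
    by (simp add: summable_iff_convergent' B_def)
qed

lemma bilateral_sums_telescope:
  fixes G :: "int \<Rightarrow> complex"
  assumes "(\<lambda>m. G (- int m)) \<longlonglongrightarrow> A" "(\<lambda>n. G (int n)) \<longlonglongrightarrow> B"
  shows "bilateral_sums (\<lambda>k. G k - G (k + 1)) (A - B)"
proof -
  have "(\<Sum>k\<in>{- int m..int n}. G k - G (k + 1)) = G (- int m) - G (int (Suc n))" for m n
    using sum_int_telescope[of G "- int m" "m + n"] by (simp add: add.commute)
  moreover have "((\<lambda>x. G (- int (fst x)) - G (int (Suc (snd x)))) \<longlongrightarrow> A - B)
      (sequentially \<times>\<^sub>F sequentially)"
    by (intro tendsto_diff filterlim_compose[OF assms(1) filterlim_fst]
        filterlim_compose[OF LIMSEQ_Suc[OF assms(2)] filterlim_snd])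
  ultimately show ?thesis
    by (simp add: bilateral_sums_def case_prod_unfold)
qed

lemma summable_Ln_imp_convergent_prod:
  fixes w :: "nat \<Rightarrow> complex"
  assumes "summable (\<lambda>i. Ln (w i))" "\<And>i. w i \<noteq> 0"
  shows "convergent_prod w"
  using sums_imp_has_prod_exp[OF summable_sums[OF assms(1)]] assms(2)
  by (auto simp: has_prod_def convergent_prod_def)

lemma bilateral_sums_Ln_imp_convergent_prod:
  assumes "bilateral_sums (\<lambda>k. Ln (z k)) L" "\<And>k. z k \<noteq> 0"
  shows "convergent_prod (\<lambda>n. inverse (z (- int n - 1)))" "convergent_prod (\<lambda>n. z (int n))"
proof -
  have "convergent_prod (\<lambda>n. z (- int n - 1))"
    using bilateral_sums_imp_summable(1)[OF assms(1)] assms(2)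
    by (rule summable_Ln_imp_convergent_prod)
  then show "convergent_prod (\<lambda>n. inverse (z (- int n - 1)))"
    using has_prod_inverse convergent_prod_has_prod_iff has_prod_iff by blast
  show "convergent_prod (\<lambda>n. z (int n))"
    using bilateral_sums_imp_summable(2)[OF assms(1)] assms(2)
    by (rule summable_Ln_imp_convergent_prod)
qed

lemma bilateral_sums_gprod_telescope:
  fixes z w u :: "int \<Rightarrow> complex"
  assumes z_nz: "\<And>k. z k \<noteq> 0" and identity: "\<And>k. w k * (1 - u k) = 1 - z k"
    and neg: "convergent_prod (\<lambda>n. inverse (z (- int n - 1)))"
    and pos: "convergent_prod (\<lambda>n. z (int n))"
  shows "bilateral_sums (\<lambda>k. w k * gprod z k * (1 - u k))
    ((\<Prod>n. inverse (z (- int n - 1))) - (\<Prod>n. z (int n)))"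
proof -
  have "w k * gprod z k * (1 - u k) = gprod z k * (w k * (1 - u k))" for k
    by (simp add: algebra_simps)
  also have "\<dots> k = gprod z k - gprod z (k + 1)" for k
    unfolding identity using gprod_add_1[of z k] z_nz by (simp add: right_diff_distrib)
  moreover have "(\<lambda>m. gprod z (- int m)) \<longlonglongrightarrow> (\<Prod>n. inverse (z (- int n - 1)))"
    unfolding gprod_minus_of_nat using convergent_prod_has_prod[OF neg] by (rule has_prod_imp_tendsto')
  moreover have "(\<lambda>n. gprod z (int n)) \<longlonglongrightarrow> (\<Prod>n. z (int n))"
    unfolding gprod_of_nat using convergent_prod_has_prod[OF pos] by (rule has_prod_imp_tendsto')
  ultimately show ?thesis
    using bilateral_sums_telescope[of "gprod z"] by simp
qed

theorem mainTheorem5: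
  fixes p :: complex and a b c d e f g :: "int \<Rightarrow> complex"
  assumes hp: "norm p < 1"
    and nz: "\<And>k. a k \<noteq> 0 \<and> b k \<noteq> 0 \<and> c k \<noteq> 0 \<and> d k \<noteq> 0 \<and> e k \<noteq> 0 \<and> f k \<noteq> 0 \<and> g k \<noteq> 0"
    and hg: "\<And>k. a k ^ 3 = b k * c k * d k * e k * f k * g k"
    and wd1: "\<And>k. thetas [a k / b k, a k / c k, a k / d k, a k / e k, a k / f k,
                      b k * c k * d k * e k * f k / a k ^ 2] p \<noteq> 0"
    and wd2: "\<And>k. thetas [a k ^ 2 / (b k * c k * d k * e k * f k), a k ^ 2 / (b k * c k * d k),
                      a k / f k, a k / e k] p \<noteq> 0"
    and wd3: "\<And>k. thetas [a k / d k, a k / c k, a k / b k] p \<noteq> 0"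
    and wd4: "\<And>k. thetas [a k ^ 2 / (b k * c k * d k * e k), a k ^ 2 / (b k * c k * d k * f k),
                      a k ^ 2 / (b k * c k * d k * g k)] p \<noteq> 0"
    and z_def: "\<And>k. z k = thetas [b k, c k, d k, e k, f k, a k ^ 3 / (b k * c k * d k * e k * f k)] p
                      / thetas [a k / b k, a k / c k, a k / d k, a k / e k, a k / f k,
                                b k * c k * d k * e k * f k / a k ^ 2] p"
    and re_pos: "\<And>k. Re (z k) > 0"
    and log_conv: "\<exists>L. bilateral_sums (\<lambda>k. Ln (z k)) L"
  shows "bilateral_sums
     (\<lambda>k. thetas [a k, a k / (e k * f k), a k ^ 2 / (b k * c k * d k * e k),
                   a k ^ 2 / (b k * c k * d k * f k)] p
          / thetas [a k ^ 2 / (b k * c k * d k * e k * f k), a k ^ 2 / (b k * c k * d k),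
                    a k / f k, a k / e k] p
          * gprod z k
          * (1 - thetas [a k / (b k * c k), a k / (b k * d k), a k / (c k * d k)] p
                 / thetas [a k / d k, a k / c k, a k / b k] p
               * (thetas [e k, f k, g k] p
                 / thetas [a k ^ 2 / (b k * c k * d k * e k), a k ^ 2 / (b k * c k * d k * f k),
                           a k ^ 2 / (b k * c k * d k * g k)] p)))
     ((\<Prod>n. inverse (z (- int n - 1))) - (\<Prod>n. z (int n)))"
proof -
  have z_nz: "z k \<noteq> 0" for k
    using re_pos[of k] by auto
  obtain L where "bilateral_sums (\<lambda>k. Ln (z k)) L"
    using log_conv by blast
  note convergent = bilateral_sums_Ln_imp_convergent_prod[OF this z_nz]
  show ?thesis
  proof (rule bilateral_sums_gprod_telescope[OF z_nz _ convergent], goal_cases)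
    case (1 k)
    show ?case
      using theta_summand_identity[OF hp _ _ _ _ _ _ _ hg[of k] wd1[of k] wd2[of k] wd3[of k] wd4[of k]]
        nz[of k] z_def[of k]
      by simp
  qed
qed

end
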